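(* For every integer $k>0$ there exists a monotonic transition function $\varphi$ with $\varphi(0)=0$ and $\varphi'(0)>0$ such that the function $$I(x)=4\int_x^{L(x)}\varphi(s)\big(\varphi'(s)\big)^2\,ds,\qquad x\in(0,1),$$ where $L(x)\in(-1,0)$ is defined by $\varphi(L(x))=-\varphi(x)$, has at least $k$ simple zeros in $(0,1)$.
   Context: A transition function is a $C^\infty$ function $\varphi:\mathbb{R}\to\mathbb{R}$ with $\varphi(t)=-1$ for $t\le-1$, $\varphi(t)=1$ for $t\ge1$; monotonic means $\varphi'(t)>0$ on $(-1,1)$. *)

theory Defs
  imports "HOL-Analysis.Analysis"
begin

definition smooth_fun :: "(real \<Rightarrow> real) \<Rightarrow> bool" where
  "smooth_fun f \<longleftrightarrow> (\<forall>n x. ((deriv ^^ n) f) differentiable (at x))"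

definition transition_fun :: "(real \<Rightarrow> real) \<Rightarrow> bool" where
  "transition_fun \<phi> \<longleftrightarrow> smooth_fun \<phi> \<and>
     (\<forall>t. t \<le> -1 \<longrightarrow> \<phi> t = -1) \<and> (\<forall>t. t \<ge> 1 \<longrightarrow> \<phi> t = 1)"

definition monotonic_transition :: "(real \<Rightarrow> real) \<Rightarrow> bool" where
  "monotonic_transition \<phi> \<longleftrightarrow> transition_fun \<phi> \<and>
     (\<forall>t\<in>{-1<..<1}. deriv \<phi> t > 0)"

definition L_fun :: "(real \<Rightarrow> real) \<Rightarrow> real \<Rightarrow> real" where
  "L_fun \<phi> x = (THE y. y \<in> {-1<..<0} \<and> \<phi> y = - \<phi> x)"

text \<open>I(x) = 4 * int_x^{L x} phi(s) phi'(s)^2 ds (oriented integral; L x < x).\<close>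
definition I_fun :: "(real \<Rightarrow> real) \<Rightarrow> real \<Rightarrow> real" where
  "I_fun \<phi> x = 4 * (if x \<le> L_fun \<phi> x
      then integral {x..L_fun \<phi> x} (\<lambda>s. \<phi> s * (deriv \<phi> s)^2)
      else - integral {L_fun \<phi> x..x} (\<lambda>s. \<phi> s * (deriv \<phi> s)^2))"

definition simple_zero :: "(real \<Rightarrow> real) \<Rightarrow> real \<Rightarrow> bool" where
  "simple_zero f x \<longleftrightarrow> f x = 0 \<and> (\<exists>d. (f has_real_derivative d) (at x) \<and> d \<noteq> 0)"

end

theory Submission
  imports Defs "HOL-Computational_Algebra.Polynomial"
begin

text \<open>
  Start from the odd transition \<open>psi\<close> built from \<open>exp (-1/x)\<close>; for it \<open>L x = -x\<close> and \<open>I\<close>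
  vanishes identically. Reparametrise it as \<open>phi = psi \<circ> sigma\<close> with
  \<open>sigma t = t + \<epsilon> * \<Sum>\<^sub>j w\<^sub>j * ramp\<^sub>j t\<close>, where \<open>ramp\<^sub>j\<close> rises from 0 to 1 across the \<open>j\<close>-th cell
  of a grid of \<open>[1/4, 3/4]\<close> and \<open>\<Sum>\<^sub>j w\<^sub>j = 0\<close>, so that \<open>sigma\<close> is the identity outside
  \<open>[1/4, 3/4]\<close>. Then \<open>L x = - sigma x\<close> and \<open>I = 4 J\<close> with
  \<open>J' = - \<epsilon> * q * \<Sum>\<^sub>j w\<^sub>j * ramp\<^sub>j'\<close> for a function \<open>q\<close> bounded between positive constants, so
  across the \<open>j\<close>-th cell \<open>J\<close> changes by about \<open>- \<epsilon> * w\<^sub>j\<close>. With weights of alternating sign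
  growing geometrically fast, \<open>J\<close> alternates in sign at the grid points, and every sign change
  is a simple zero because \<open>J' \<noteq> 0\<close> inside a cell.
\<close>

lemma deriv_eqI: "(\<And>x. (f has_real_derivative f' x) (at x)) \<Longrightarrow> deriv f = f'"
  by (rule ext) (rule DERIV_imp_deriv)

lemma has_real_derivative_deriv: "f differentiable (at x) \<Longrightarrow> (f has_real_derivative deriv f x) (at x)"
  using DERIV_deriv_iff_real_differentiable by blast

lemma increment_bounds_by_comparison:
  fixes F W :: "real \<Rightarrow> real"
  assumes "p \<le> r"
    and F': "\<And>t. t \<in> {p..r} \<Longrightarrow> (F has_real_derivative q t * W' t) (at t)"
    and W': "\<And>t. t \<in> {p..r} \<Longrightarrow> (W has_real_derivative W' t) (at t)"
    and W'_nonneg: "\<And>t. t \<in> {p..r} \<Longrightarrow> W' t \<ge> 0"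
    and q_bounds: "\<And>t. t \<in> {p..r} \<Longrightarrow> a \<le> q t \<and> q t \<le> b"
  shows "a * (W r - W p) \<le> F r - F p \<and> F r - F p \<le> b * (W r - W p)"
proof
  have "F p - a * W p \<le> F r - a * W r"
  proof (rule DERIV_nonneg_imp_nondecreasing[OF \<open>p \<le> r\<close>])
    fix t assume "p \<le> t" "t \<le> r"
    then have "((\<lambda>t. F t - a * W t) has_real_derivative (q t - a) * W' t) (at t)"
      using DERIV_diff[OF F' DERIV_cmult[OF W'], of t a] by (simp add: algebra_simps)
    moreover have "(q t - a) * W' t \<ge> 0"
      using q_bounds W'_nonneg \<open>p \<le> t\<close> \<open>t \<le> r\<close> by simp
    ultimately show "\<exists>y. ((\<lambda>t. F t - a * W t) has_real_derivative y) (at t) \<and> 0 \<le> y" by blast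
  qed
  then show "a * (W r - W p) \<le> F r - F p" by (simp add: algebra_simps)
  have "b * W p - F p \<le> b * W r - F r"
  proof (rule DERIV_nonneg_imp_nondecreasing[OF \<open>p \<le> r\<close>])
    fix t assume "p \<le> t" "t \<le> r"
    then have "((\<lambda>t. b * W t - F t) has_real_derivative (b - q t) * W' t) (at t)"
      using DERIV_diff[OF DERIV_cmult[OF W'] F', of t b] by (simp add: algebra_simps)
    moreover have "(b - q t) * W' t \<ge> 0"
      using q_bounds W'_nonneg \<open>p \<le> t\<close> \<open>t \<le> r\<close> by simp
    ultimately show "\<exists>y. ((\<lambda>t. b * W t - F t) has_real_derivative y) (at t) \<and> 0 \<le> y" by blast
  qed
  then show "F r - F p \<le> b * (W r - W p)" by (simp add: algebra_simps)
qed

lemma IVT_opposite_signs: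
  fixes f :: "real \<Rightarrow> real"
  assumes "a \<le> b" "continuous_on {a..b} f" "f a * f b < 0"
  shows "\<exists>z\<in>{a<..<b}. f z = 0"
proof -
  obtain z where "z \<in> {a..b}" "f z = 0"
  proof (cases "f a < 0")
    case True
    with assms have "f b > 0" by (simp add: mult_less_0_iff)
    with True assms that show ?thesis using IVT'[of f a 0 b] by force
  next
    case False
    with assms have "f a > 0" "f b < 0" by (auto simp: mult_less_0_iff)
    with assms that show ?thesis using IVT2'[of f b 0 a] by force
  qed
  moreover have "z \<noteq> a" "z \<noteq> b" using assms \<open>f z = 0\<close> by auto
  ultimately show ?thesis by auto
qed

lemma zero_sum_extension:
  fixes v :: "nat \<Rightarrow> real"
  assumes "N \<ge> 1"
  shows "\<exists>w. (\<Sum>j=1..N. w j) = 0 \<and> (\<forall>j. 1 \<le> j \<longrightarrow> j < N \<longrightarrow> w j = v j)"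
proof -
  obtain n where n: "N = Suc n" using assms by (cases N) auto
  define w where "w = v(N := - (\<Sum>j=1..n. v j))"
  have "(\<Sum>j=1..n. w j) = (\<Sum>j=1..n. v j)"
    by (rule sum.cong) (auto simp: w_def n)
  then have "(\<Sum>j=1..N. w j) = 0"
    by (simp add: n sum.cl_ivl_Suc w_def)
  moreover have "\<forall>j. 1 \<le> j \<longrightarrow> j < N \<longrightarrow> w j = v j"
    by (simp add: w_def)
  ultimately show ?thesis by blast
qed

section \<open>Closure properties of smooth functions\<close>

definition smooth_upto :: "nat \<Rightarrow> (real \<Rightarrow> real) \<Rightarrow> bool" where
  "smooth_upto n f \<longleftrightarrow> (\<forall>m\<le>n. \<forall>x. (deriv ^^ m) f differentiable (at x))"

lemma smooth_fun_iff_smooth_upto: "smooth_fun f \<longleftrightarrow> (\<forall>n. smooth_upto n f)"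
  unfolding smooth_fun_def smooth_upto_def by auto

lemma funpow_deriv_Suc: "(deriv ^^ Suc m) f = (deriv ^^ m) (deriv f)"
  by (rule funpow_Suc_right[THEN fun_cong, unfolded o_def])

lemma smooth_upto_0: "smooth_upto 0 f \<longleftrightarrow> (\<forall>x. f differentiable (at x))"
  unfolding smooth_upto_def by auto

lemma smooth_upto_Suc:
  "smooth_upto (Suc n) f \<longleftrightarrow> (\<forall>x. f differentiable (at x)) \<and> smooth_upto n (deriv f)"
proof -
  have "(\<forall>m\<le>Suc n. P m) \<longleftrightarrow> P 0 \<and> (\<forall>m\<le>n. P (Suc m))" for P
    by (metis Suc_le_mono le0 not0_implies_Suc)
  then show ?thesis
    unfolding smooth_upto_def by (simp only: funpow_deriv_Suc funpow_0)
qed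

lemma smooth_upto_SucD:
  assumes "smooth_upto (Suc n) f"
  shows "f differentiable (at x)" "smooth_upto n f" "smooth_upto n (deriv f)"
proof -
  show "smooth_upto n f" using assms by (simp add: smooth_upto_def)
qed (use assms in \<open>simp_all add: smooth_upto_Suc\<close>)

lemma smooth_upto_differentiable: "smooth_upto n f \<Longrightarrow> f differentiable (at x)"
  by (metis smooth_upto_def funpow_0 le0)

lemma smooth_upto_const: "smooth_upto n (\<lambda>x. c)"
  by (induction n arbitrary: c) (simp_all add: smooth_upto_0 smooth_upto_Suc)

lemma smooth_upto_ident: "smooth_upto n (\<lambda>x. x)"
proof (cases n)
  case (Suc m)
  have "deriv (\<lambda>x::real. x) = (\<lambda>x. 1)" by (rule deriv_eqI) auto
  then show ?thesis using Suc by (simp add: smooth_upto_Suc smooth_upto_const)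
qed (simp add: smooth_upto_0)

lemma smooth_upto_add: "smooth_upto n f \<Longrightarrow> smooth_upto n g \<Longrightarrow> smooth_upto n (\<lambda>x. f x + g x)"
proof (induction n arbitrary: f g)
  case (Suc n)
  note f = smooth_upto_SucD[OF Suc.prems(1)] and g = smooth_upto_SucD[OF Suc.prems(2)]
  have "deriv (\<lambda>x. f x + g x) = (\<lambda>x. deriv f x + deriv g x)"
    by (rule deriv_eqI) (intro DERIV_add has_real_derivative_deriv f g)
  then show ?case using Suc.IH f g by (simp add: smooth_upto_Suc)
qed (simp add: smooth_upto_0)

lemma smooth_upto_mult: "smooth_upto n f \<Longrightarrow> smooth_upto n g \<Longrightarrow> smooth_upto n (\<lambda>x. f x * g x)"
proof (induction n arbitrary: f g)
  case (Suc n)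
  note f = smooth_upto_SucD[OF Suc.prems(1)] and g = smooth_upto_SucD[OF Suc.prems(2)]
  have "deriv (\<lambda>x. f x * g x) = (\<lambda>x. deriv f x * g x + f x * deriv g x)"
    by (rule deriv_eqI, rule DERIV_cong[OF DERIV_mult]) (auto intro: has_real_derivative_deriv f g)
  then show ?case using Suc.IH f g by (simp add: smooth_upto_Suc smooth_upto_add)
qed (simp add: smooth_upto_0)

lemma smooth_upto_compose: "smooth_upto n f \<Longrightarrow> smooth_upto n g \<Longrightarrow> smooth_upto n (\<lambda>x. f (g x))"
proof (induction n arbitrary: f g)
  case 0
  then show ?case
    by (auto simp: smooth_upto_0 intro: differentiable_chain_at[unfolded o_def])
next
  case (Suc n)
  note f = smooth_upto_SucD[OF Suc.prems(1)] and g = smooth_upto_SucD[OF Suc.prems(2)]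
  have "deriv (\<lambda>x. f (g x)) = (\<lambda>x. deriv f (g x) * deriv g x)"
    by (rule deriv_eqI) (rule DERIV_chain2[OF has_real_derivative_deriv has_real_derivative_deriv]; fact)
  moreover have "(\<lambda>x. f (g x)) differentiable (at x)" for x
    using differentiable_chain_at[OF g(1) f(1)] by (simp add: o_def)
  ultimately show ?case using Suc.IH f g by (simp add: smooth_upto_Suc smooth_upto_mult)
qed

lemma smooth_upto_inverse:
  "smooth_upto n f \<Longrightarrow> (\<And>x. f x \<noteq> 0) \<Longrightarrow> smooth_upto n (\<lambda>x. inverse (f x))"
proof (induction n arbitrary: f)
  case 0
  then show ?case by (simp add: smooth_upto_0)
next
  case (Suc n)
  note f = smooth_upto_SucD[OF Suc.prems(1)]
  have df: "((\<lambda>x. inverse (f x)) has_real_derivative - deriv f x * inverse (f x) * inverse (f x)) (at x)" for x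
    using DERIV_inverse_fun[OF has_real_derivative_deriv[OF f(1)] Suc.prems(2)]
    by (simp add: power2_eq_square mult.assoc)
  have "smooth_upto n (\<lambda>x. - 1 * deriv f x * inverse (f x) * inverse (f x))"
    using Suc.IH[OF f(2) Suc.prems(2)] f(3)
    by (intro smooth_upto_mult smooth_upto_const)
  then show ?case
    using f(1) Suc.prems(2) by (simp add: smooth_upto_Suc deriv_eqI[OF df])
qed

lemma smooth_fun_const: "smooth_fun (\<lambda>x. c)"
  by (simp add: smooth_fun_iff_smooth_upto smooth_upto_const)

lemma smooth_fun_ident: "smooth_fun (\<lambda>x. x)"
  by (simp add: smooth_fun_iff_smooth_upto smooth_upto_ident)

lemma smooth_fun_add: "smooth_fun f \<Longrightarrow> smooth_fun g \<Longrightarrow> smooth_fun (\<lambda>x. f x + g x)"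
  by (simp add: smooth_fun_iff_smooth_upto smooth_upto_add)

lemma smooth_fun_mult: "smooth_fun f \<Longrightarrow> smooth_fun g \<Longrightarrow> smooth_fun (\<lambda>x. f x * g x)"
  by (simp add: smooth_fun_iff_smooth_upto smooth_upto_mult)

lemma smooth_fun_compose: "smooth_fun f \<Longrightarrow> smooth_fun g \<Longrightarrow> smooth_fun (\<lambda>x. f (g x))"
  by (simp add: smooth_fun_iff_smooth_upto smooth_upto_compose)

lemma smooth_fun_divide:
  "smooth_fun f \<Longrightarrow> smooth_fun g \<Longrightarrow> (\<And>x. g x \<noteq> 0) \<Longrightarrow> smooth_fun (\<lambda>x. f x / g x)"
  by (simp add: smooth_fun_iff_smooth_upto smooth_upto_mult smooth_upto_inverse divide_inverse)

lemma smooth_fun_diff: "smooth_fun f \<Longrightarrow> smooth_fun g \<Longrightarrow> smooth_fun (\<lambda>x. f x - g x)"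
  using smooth_fun_add[OF _ smooth_fun_mult[OF smooth_fun_const, of g "-1"], of f] by simp

lemma smooth_fun_sum:
  "(\<And>j. j \<in> A \<Longrightarrow> smooth_fun (f j)) \<Longrightarrow> smooth_fun (\<lambda>x. \<Sum>j\<in>A. f j x)"
  by (induction A rule: infinite_finite_induct) (auto intro: smooth_fun_const smooth_fun_add)

lemma smooth_fun_deriv: "smooth_fun f \<Longrightarrow> smooth_fun (deriv f)"
  by (simp add: smooth_fun_iff_smooth_upto smooth_upto_SucD(3))

lemma smooth_fun_differentiable: "smooth_fun f \<Longrightarrow> f differentiable (at x)"
  using smooth_fun_iff_smooth_upto smooth_upto_differentiable by blast

lemma smooth_fun_isCont: "smooth_fun f \<Longrightarrow> isCont f x"
  by (simp add: differentiable_imp_continuous_within smooth_fun_differentiable)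

lemma smooth_fun_derivative_sequence:
  assumes "D 0 = f" and "\<And>n x. (D n has_real_derivative D (Suc n) x) (at x)"
  shows "smooth_fun f"
proof -
  have "(deriv ^^ n) f = D n" for n
    by (induction n) (simp_all add: assms deriv_eqI)
  then show ?thesis
    unfolding smooth_fun_def real_differentiable_def using assms(2) by metis
qed

section \<open>The odd transition function \<open>psi\<close>\<close>

text \<open>\<open>flat_exp_deriv n\<close> is the \<open>n\<close>-th derivative of \<open>x \<mapsto> exp (-1/x)\<close> on \<open>x > 0\<close>, extended by 0.\<close>

fun flat_exp_poly :: "nat \<Rightarrow> real poly" where
  "flat_exp_poly 0 = 1"
| "flat_exp_poly (Suc n) = [:0, 0, 1:] * (flat_exp_poly n - pderiv (flat_exp_poly n))"

definition flat_exp_deriv :: "nat \<Rightarrow> real \<Rightarrow> real" where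
  "flat_exp_deriv n x = (if x > 0 then poly (flat_exp_poly n) (1/x) * exp (- (1/x)) else 0)"

abbreviation flat_exp :: "real \<Rightarrow> real" where
  "flat_exp \<equiv> flat_exp_deriv 0"

abbreviation flat_exp' :: "real \<Rightarrow> real" where
  "flat_exp' \<equiv> flat_exp_deriv (Suc 0)"

lemma poly_inverse_times_exp_tendsto_0:
  "((\<lambda>y. poly (q::real poly) (1/y) * exp (- (1/y))) \<longlongrightarrow> 0) (at_right 0)"
proof -
  have "(\<lambda>t. poly q t * exp (- t)) = (\<lambda>t. \<Sum>i\<le>degree q. coeff q i * (t ^ i / exp t))"
    by (simp add: poly_altdef sum_distrib_right exp_minus divide_inverse mult.assoc)
  moreover have "((\<lambda>t. \<Sum>i\<le>degree q. coeff q i * (t ^ i / exp t)) \<longlongrightarrow> (\<Sum>i\<le>degree q. coeff q i * 0)) at_top"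
    by (intro tendsto_sum tendsto_mult tendsto_const tendsto_power_div_exp_0)
  ultimately have "((\<lambda>t. poly q t * exp (- t)) \<longlongrightarrow> 0) at_top"
    by simp
  from filterlim_compose[OF this filterlim_inverse_at_top_right] show ?thesis
    by (simp add: inverse_eq_divide)
qed

lemma flat_exp_deriv_has_derivative_pos:
  assumes "x > 0"
  shows "(flat_exp_deriv n has_real_derivative flat_exp_deriv (Suc n) x) (at x)"
proof -
  let ?P = "flat_exp_poly n"
  have inv: "((\<lambda>x. 1/x) has_real_derivative - (1/x^2)) (at x)"
    using assms by (auto intro!: derivative_eq_intros simp: power2_eq_square)
  have d: "((\<lambda>x. poly ?P (1/x) * exp (- (1/x))) has_real_derivative
      poly (pderiv ?P) (1/x) * (- (1/x^2)) * exp (- (1/x)) + poly ?P (1/x) * (exp (- (1/x)) * (1/x^2))) (at x)"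
    using DERIV_mult[OF DERIV_chain2[OF poly_DERIV[of ?P] inv] DERIV_chain2[OF DERIV_exp DERIV_minus[OF inv]]]
    by (simp add: ac_simps)
  have val: "poly (pderiv ?P) (1/x) * (- (1/x^2)) * exp (- (1/x)) + poly ?P (1/x) * (exp (- (1/x)) * (1/x^2))
      = flat_exp_deriv (Suc n) x"
    using assms by (simp add: flat_exp_deriv_def algebra_simps power2_eq_square)
  show ?thesis
    by (rule has_field_derivative_transform_within_open[OF d[unfolded val], of "{0<..}"])
       (use assms in \<open>auto simp: flat_exp_deriv_def\<close>)
qed

lemma flat_exp_deriv_has_derivative_neg:
  assumes "x < 0"
  shows "(flat_exp_deriv n has_real_derivative flat_exp_deriv (Suc n) x) (at x)"
proof -
  have "(flat_exp_deriv n has_real_derivative 0) (at x)"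
    by (rule has_field_derivative_transform_within_open[OF DERIV_const, of "{..<0}"])
       (use assms in \<open>auto simp: flat_exp_deriv_def\<close>)
  then show ?thesis
    using assms by (simp add: flat_exp_deriv_def)
qed

lemma flat_exp_deriv_has_derivative_0:
  "(flat_exp_deriv n has_real_derivative flat_exp_deriv (Suc n) 0) (at 0)"
  unfolding has_field_derivative_iff
proof (rule filterlim_split_at)
  show "((\<lambda>y. (flat_exp_deriv n y - flat_exp_deriv n 0) / (y - 0)) \<longlongrightarrow> flat_exp_deriv (Suc n) 0) (at_left 0)"
    by (rule tendsto_eventually) (simp add: eventually_at_filter flat_exp_deriv_def)
  have "((\<lambda>y. poly ([:0, 1:] * flat_exp_poly n) (1/y) * exp (- (1/y))) \<longlongrightarrow> 0) (at_right 0)"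
    by (rule poly_inverse_times_exp_tendsto_0)
  moreover have "\<forall>\<^sub>F y in at_right 0.
      poly ([:0, 1:] * flat_exp_poly n) (1/y) * exp (- (1/y)) = (flat_exp_deriv n y - flat_exp_deriv n 0) / (y - 0)"
    by (simp add: eventually_at_filter flat_exp_deriv_def)
  ultimately have "((\<lambda>y. (flat_exp_deriv n y - flat_exp_deriv n 0) / (y - 0)) \<longlongrightarrow> 0) (at_right 0)"
    by (rule Lim_transform_eventually)
  moreover have "flat_exp_deriv (Suc n) 0 = 0"
    by (simp add: flat_exp_deriv_def)
  ultimately show "((\<lambda>y. (flat_exp_deriv n y - flat_exp_deriv n 0) / (y - 0)) \<longlongrightarrow> flat_exp_deriv (Suc n) 0) (at_right 0)"
    by (simp only:)
qed

lemma flat_exp_deriv_has_derivative: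
  "(flat_exp_deriv n has_real_derivative flat_exp_deriv (Suc n) x) (at x)"
  using flat_exp_deriv_has_derivative_pos flat_exp_deriv_has_derivative_neg
    flat_exp_deriv_has_derivative_0
  by (cases x "0::real" rule: linorder_cases) auto

lemma smooth_fun_flat_exp: "smooth_fun flat_exp"
  by (rule smooth_fun_derivative_sequence[of flat_exp_deriv]) (simp_all add: flat_exp_deriv_has_derivative)

lemma flat_exp_pos: "x > 0 \<Longrightarrow> flat_exp x > 0"
  and flat_exp_eq_0: "x \<le> 0 \<Longrightarrow> flat_exp x = 0"
  and flat_exp_nonneg: "flat_exp x \<ge> 0"
  by (simp_all add: flat_exp_deriv_def)

lemma flat_exp'_pos: "x > 0 \<Longrightarrow> flat_exp' x > 0"
  and flat_exp'_eq_0: "x \<le> 0 \<Longrightarrow> flat_exp' x = 0"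
  and flat_exp'_nonneg: "flat_exp' x \<ge> 0"
  by (simp_all add: flat_exp_deriv_def power2_eq_square)

definition psi :: "real \<Rightarrow> real" where
  "psi t = (flat_exp (1 + t) - flat_exp (1 - t)) / (flat_exp (1 + t) + flat_exp (1 - t))"

definition psi' :: "real \<Rightarrow> real" where
  "psi' t = 2 * (flat_exp' (1 + t) * flat_exp (1 - t) + flat_exp (1 + t) * flat_exp' (1 - t))
              / (flat_exp (1 + t) + flat_exp (1 - t))^2"

lemma psi_denominator_pos: "flat_exp (1 + t) + flat_exp (1 - t) > 0"
  using flat_exp_pos[of "1 + t"] flat_exp_pos[of "1 - t"] flat_exp_nonneg[of "1 + t"] flat_exp_nonneg[of "1 - t"]
  by (cases "t \<ge> 0") auto

lemma psi_has_derivative: "(psi has_real_derivative psi' t) (at t)"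
proof -
  have d1: "((\<lambda>t. flat_exp (1 + t)) has_real_derivative flat_exp' (1 + t)) (at t)"
    using DERIV_chain2[OF flat_exp_deriv_has_derivative DERIV_add[OF DERIV_const DERIV_ident]] by simp
  have d2: "((\<lambda>t. flat_exp (1 - t)) has_real_derivative - flat_exp' (1 - t)) (at t)"
    using DERIV_chain2[OF flat_exp_deriv_has_derivative DERIV_diff[OF DERIV_const DERIV_ident]] by simp
  have "(psi has_real_derivative
      ((flat_exp' (1 + t) - - flat_exp' (1 - t)) * (flat_exp (1 + t) + flat_exp (1 - t))
       - (flat_exp (1 + t) - flat_exp (1 - t)) * (flat_exp' (1 + t) + - flat_exp' (1 - t)))
      / ((flat_exp (1 + t) + flat_exp (1 - t)) * (flat_exp (1 + t) + flat_exp (1 - t)))) (at t)"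
    unfolding psi_def[abs_def]
    using psi_denominator_pos[of t] by (intro DERIV_divide DERIV_diff DERIV_add d1 d2) simp
  then show ?thesis
    by (simp add: psi'_def power2_eq_square algebra_simps)
qed

lemma deriv_psi: "deriv psi = psi'"
  by (rule deriv_eqI) (rule psi_has_derivative)

lemma smooth_fun_psi: "smooth_fun psi"
proof -
  have "smooth_fun (\<lambda>t. flat_exp (1 + t))" "smooth_fun (\<lambda>t. flat_exp (1 - t))"
    by (rule smooth_fun_compose[OF smooth_fun_flat_exp],
        intro smooth_fun_add smooth_fun_diff smooth_fun_const smooth_fun_ident)+
  then show ?thesis
    unfolding psi_def[abs_def] using psi_denominator_pos
    by (intro smooth_fun_divide smooth_fun_diff smooth_fun_add) (auto simp: less_le)
qed

lemma isCont_psi: "isCont psi t"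
  using smooth_fun_isCont[OF smooth_fun_psi] .

lemma isCont_psi': "isCont psi' t"
  using smooth_fun_isCont[OF smooth_fun_deriv[OF smooth_fun_psi]] by (simp add: deriv_psi)

lemma psi_minus: "psi (- t) = - psi t"
  unfolding psi_def by (simp add: minus_divide_left add.commute)

lemma psi'_minus: "psi' (- t) = psi' t"
  unfolding psi'_def by (simp add: add.commute mult.commute)

lemma psi_eq_minus_1: "t \<le> -1 \<Longrightarrow> psi t = -1"
  unfolding psi_def using flat_exp_eq_0[of "1 + t"] flat_exp_pos[of "1 - t"] by simp

lemma psi_eq_1: "t \<ge> 1 \<Longrightarrow> psi t = 1"
  unfolding psi_def using flat_exp_eq_0[of "1 - t"] flat_exp_pos[of "1 + t"] by simp

lemma psi_0: "psi 0 = 0"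
  unfolding psi_def by simp

lemma psi'_pos: "-1 < t \<Longrightarrow> t < 1 \<Longrightarrow> psi' t > 0"
  unfolding psi'_def
  using flat_exp_pos[of "1 + t"] flat_exp_pos[of "1 - t"] flat_exp'_pos[of "1 + t"] flat_exp'_pos[of "1 - t"]
    psi_denominator_pos[of t]
  by (simp add: add_pos_pos)

lemma psi'_nonneg: "psi' t \<ge> 0"
  unfolding psi'_def
  using flat_exp_nonneg[of "1 + t"] flat_exp_nonneg[of "1 - t"] flat_exp'_nonneg[of "1 + t"] flat_exp'_nonneg[of "1 - t"]
  by simp

lemma psi'_eq_0: "t \<le> -1 \<or> t \<ge> 1 \<Longrightarrow> psi' t = 0"
  unfolding psi'_def
  using flat_exp_eq_0[of "1 - t"] flat_exp_eq_0[of "1 + t"] flat_exp'_eq_0[of "1 - t"] flat_exp'_eq_0[of "1 + t"]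
  by auto

lemma psi_strict_mono_on: "strict_mono_on {-1..1} psi"
proof (rule strict_mono_onI)
  fix s t :: real
  assume st: "s \<in> {-1..1}" "t \<in> {-1..1}" "s < t"
  show "psi s < psi t"
  proof (rule DERIV_pos_imp_increasing_open[OF \<open>s < t\<close>])
    show "\<exists>y. (psi has_real_derivative y) (at x) \<and> 0 < y" if "s < x" "x < t" for x
      using psi_has_derivative psi'_pos st that by force
    show "continuous_on {s..t} psi"
      using isCont_psi by (simp add: continuous_at_imp_continuous_on)
  qed
qed

lemma psi_pos: "0 < t \<Longrightarrow> t \<le> 1 \<Longrightarrow> psi t > 0"
  using strict_mono_onD[OF psi_strict_mono_on, of 0 t] psi_0 by simp

definition Q :: "real \<Rightarrow> real" where
  "Q y = psi y * (psi' y)^2"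

lemma isCont_Q: "isCont Q y"
  unfolding Q_def[abs_def] by (intro continuous_intros isCont_psi isCont_psi')

lemma Q_pos: "0 < y \<Longrightarrow> y < 1 \<Longrightarrow> Q y > 0"
  using psi_pos[of y] psi'_pos[of y] by (simp add: Q_def)

lemma Q_bounds_exist: "\<exists>a b. a > 0 \<and> (\<forall>y. 1/4 \<le> y \<longrightarrow> y \<le> 3/4 \<longrightarrow> a \<le> Q y \<and> Q y \<le> b)"
proof -
  have cont: "continuous_on {1/4..3/4} Q"
    using isCont_Q by (simp add: continuous_at_imp_continuous_on)
  obtain y1 where y1: "y1 \<in> {1/4..3/4}" "\<And>y. y \<in> {1/4..3/4} \<Longrightarrow> Q y1 \<le> Q y"
    using continuous_attains_inf[OF compact_Icc _ cont] by auto
  obtain y2 where "y2 \<in> {1/4..3/4}" "\<And>y. y \<in> {1/4..3/4} \<Longrightarrow> Q y \<le> Q y2"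
    using continuous_attains_sup[OF compact_Icc _ cont] by auto
  moreover have "Q y1 > 0"
    using y1(1) by (intro Q_pos) auto
  ultimately show ?thesis
    using y1(2) by (intro exI[of _ "Q y1"] exI[of _ "Q y2"]) auto
qed

section \<open>Ramps on a grid of \<open>[1/4, 3/4]\<close>\<close>

definition grid :: "nat \<Rightarrow> nat \<Rightarrow> real" where
  "grid N j = 1/4 + real j / (2 * real N)"

text \<open>\<open>ramp_arg N j\<close> maps the cell \<open>[grid N (j - 1), grid N j]\<close> affinely onto \<open>[-1, 1]\<close>.\<close>

definition ramp_arg :: "nat \<Rightarrow> nat \<Rightarrow> real \<Rightarrow> real" where
  "ramp_arg N j t = 4 * real N * (t - 1/4) - (2 * real j - 1)"

definition ramp :: "nat \<Rightarrow> nat \<Rightarrow> real \<Rightarrow> real" where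
  "ramp N j t = (1 + psi (ramp_arg N j t)) / 2"

definition ramp' :: "nat \<Rightarrow> nat \<Rightarrow> real \<Rightarrow> real" where
  "ramp' N j t = 2 * real N * psi' (ramp_arg N j t)"

definition perturbation :: "nat \<Rightarrow> (nat \<Rightarrow> real) \<Rightarrow> real \<Rightarrow> real" where
  "perturbation N w t = (\<Sum>j=1..N. w j * ramp N j t)"

definition perturbation' :: "nat \<Rightarrow> (nat \<Rightarrow> real) \<Rightarrow> real \<Rightarrow> real" where
  "perturbation' N w t = (\<Sum>j=1..N. w j * ramp' N j t)"

lemma grid_strict_mono: "N \<ge> 1 \<Longrightarrow> strict_mono (grid N)"
  by (rule strict_monoI) (simp add: grid_def divide_strict_right_mono)

lemma grid_0: "grid N 0 = 1/4"
  by (simp add: grid_def)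

lemma grid_self: "N \<ge> 1 \<Longrightarrow> grid N N = 3/4"
  by (simp add: grid_def)

lemma grid_bounds: "N \<ge> 1 \<Longrightarrow> j \<le> N \<Longrightarrow> 1/4 \<le> grid N j \<and> grid N j \<le> 3/4"
  by (simp add: grid_def field_simps)

lemma ramp_arg_strict_mono: "N \<ge> 1 \<Longrightarrow> strict_mono (ramp_arg N j)"
  by (rule strict_monoI) (simp add: ramp_arg_def)

lemma ramp_arg_grid: "N \<ge> 1 \<Longrightarrow> ramp_arg N j (grid N i) = 2 * real i - 2 * real j + 1"
  by (simp add: ramp_arg_def grid_def field_simps)

lemma ramp_arg_below:
  assumes "N \<ge> 1" "t \<le> grid N i" "i < j"
  shows "ramp_arg N j t \<le> -1"
  using strict_mono_less_eq[OF ramp_arg_strict_mono[OF assms(1), of j], of t "grid N i"] assms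
  by (simp add: ramp_arg_grid)

lemma ramp_arg_above:
  assumes "N \<ge> 1" "grid N i \<le> t" "j \<le> i"
  shows "ramp_arg N j t \<ge> 1"
  using strict_mono_less_eq[OF ramp_arg_strict_mono[OF assms(1), of j], of "grid N i" t] assms
  by (simp add: ramp_arg_grid)

lemma ramp_arg_inside:
  assumes "N \<ge> 1" "1 \<le> j" "grid N (j - 1) < t" "t < grid N j"
  shows "-1 < ramp_arg N j t" "ramp_arg N j t < 1"
  using strict_mono_less[OF ramp_arg_strict_mono[OF assms(1), of j], of "grid N (j - 1)" t]
    strict_mono_less[OF ramp_arg_strict_mono[OF assms(1), of j], of t "grid N j"] assms
  by (simp_all add: ramp_arg_grid of_nat_diff)

lemma ramp_has_derivative: "(ramp N j has_real_derivative ramp' N j t) (at t)"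
proof -
  have "(ramp_arg N j has_real_derivative 4 * real N) (at t)"
    unfolding ramp_arg_def[abs_def] by (auto intro!: derivative_eq_intros)
  from DERIV_chain2[OF psi_has_derivative this] show ?thesis
    unfolding ramp_def[abs_def] ramp'_def
    by (auto intro!: derivative_eq_intros)
qed

lemma smooth_fun_ramp: "smooth_fun (ramp N j)"
proof -
  have "smooth_fun (ramp_arg N j)"
    unfolding ramp_arg_def[abs_def] by (intro smooth_fun_diff smooth_fun_mult smooth_fun_const smooth_fun_ident)
  then have "smooth_fun (\<lambda>t. psi (ramp_arg N j t))"
    by (rule smooth_fun_compose[OF smooth_fun_psi])
  then show ?thesis
    unfolding ramp_def[abs_def] by (intro smooth_fun_divide smooth_fun_add smooth_fun_const) auto
qed

lemma ramp_eq_0: "N \<ge> 1 \<Longrightarrow> t \<le> grid N i \<Longrightarrow> i < j \<Longrightarrow> ramp N j t = 0"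
  by (simp add: ramp_def psi_eq_minus_1 ramp_arg_below)

lemma ramp_eq_1: "N \<ge> 1 \<Longrightarrow> grid N i \<le> t \<Longrightarrow> j \<le> i \<Longrightarrow> ramp N j t = 1"
  by (simp add: ramp_def psi_eq_1 ramp_arg_above)

lemma ramp'_eq_0_below: "N \<ge> 1 \<Longrightarrow> t \<le> grid N i \<Longrightarrow> i < j \<Longrightarrow> ramp' N j t = 0"
  by (simp add: ramp'_def psi'_eq_0 ramp_arg_below)

lemma ramp'_eq_0_above: "N \<ge> 1 \<Longrightarrow> grid N i \<le> t \<Longrightarrow> j \<le> i \<Longrightarrow> ramp' N j t = 0"
  by (simp add: ramp'_def psi'_eq_0 ramp_arg_above)

lemma ramp'_pos: "N \<ge> 1 \<Longrightarrow> 1 \<le> j \<Longrightarrow> grid N (j - 1) < t \<Longrightarrow> t < grid N j \<Longrightarrow> ramp' N j t > 0"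
  by (simp add: ramp'_def psi'_pos ramp_arg_inside)

lemma ramp'_nonneg: "ramp' N j t \<ge> 0"
  by (simp add: ramp'_def psi'_nonneg)

lemma ramp_increment: "N \<ge> 1 \<Longrightarrow> 1 \<le> j \<Longrightarrow> ramp N j (grid N j) - ramp N j (grid N (j - 1)) = 1"
  using ramp_eq_0[of N "grid N (j - 1)" "j - 1" j] ramp_eq_1[of N j "grid N j" j] by simp

lemma perturbation_has_derivative: "(perturbation N w has_real_derivative perturbation' N w t) (at t)"
  unfolding perturbation_def[abs_def] perturbation'_def
  by (intro DERIV_sum DERIV_cmult ramp_has_derivative)

lemma smooth_fun_perturbation: "smooth_fun (perturbation N w)"
  unfolding perturbation_def[abs_def]
  by (intro smooth_fun_sum smooth_fun_mult smooth_fun_const smooth_fun_ramp)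

lemma isCont_perturbation': "isCont (perturbation' N w) t"
  unfolding perturbation'_def[abs_def] ramp'_def ramp_arg_def
  by (intro continuous_intros isCont_o2[OF _ isCont_psi'])

lemma perturbation_eq_0_below: "N \<ge> 1 \<Longrightarrow> t \<le> 1/4 \<Longrightarrow> perturbation N w t = 0"
  unfolding perturbation_def by (intro sum.neutral) (simp add: ramp_eq_0[where i = 0] grid_0)

lemma perturbation_eq_0_above:
  "N \<ge> 1 \<Longrightarrow> (\<Sum>j=1..N. w j) = 0 \<Longrightarrow> t \<ge> 3/4 \<Longrightarrow> perturbation N w t = 0"
  unfolding perturbation_def by (simp add: ramp_eq_1[where i = N] grid_self)

lemma perturbation'_eq_0_outside:
  "N \<ge> 1 \<Longrightarrow> t \<le> 1/4 \<or> t \<ge> 3/4 \<Longrightarrow> perturbation' N w t = 0"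
  unfolding perturbation'_def
  by (intro sum.neutral) (auto simp: ramp'_eq_0_below[where i = 0] ramp'_eq_0_above[where i = N] grid_0 grid_self)

lemma perturbation'_cell:
  assumes "N \<ge> 1" "1 \<le> m" "m \<le> N" "grid N (m - 1) \<le> t" "t \<le> grid N m"
  shows "perturbation' N w t = w m * ramp' N m t"
proof -
  have "w j * ramp' N j t = 0" if "j \<in> {1..N} - {m}" for j
    using that assms ramp'_eq_0_above[where i = "m - 1"] ramp'_eq_0_below[where i = m]
    by (cases "j < m") auto
  then have "(\<Sum>j\<in>{1..N} - {m}. w j * ramp' N j t) = 0"
    by (rule sum.neutral[OF ballI])
  moreover have "perturbation' N w t = w m * ramp' N m t + (\<Sum>j\<in>{1..N} - {m}. w j * ramp' N j t)"
    unfolding perturbation'_def using assms by (intro sum.remove) auto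
  ultimately show ?thesis by simp
qed

lemma small_amplitude_exists:
  assumes "N \<ge> 1"
  shows "\<exists>\<epsilon>>0. \<forall>t. \<epsilon> * \<bar>perturbation' N w t\<bar> \<le> 1/2"
proof -
  have "continuous_on {1/4..3/4} (\<lambda>t. \<bar>perturbation' N w t\<bar>)"
    by (intro continuous_at_imp_continuous_on ballI continuous_intros isCont_perturbation')
  from continuous_attains_sup[OF compact_Icc _ this]
  obtain t0 where t0: "t0 \<in> {1/4..3/4}"
      "\<And>t. t \<in> {1/4..3/4} \<Longrightarrow> \<bar>perturbation' N w t\<bar> \<le> \<bar>perturbation' N w t0\<bar>"
    by auto
  define M where "M = \<bar>perturbation' N w t0\<bar>"
  have M: "\<bar>perturbation' N w t\<bar> \<le> M" for t
  proof (cases "t \<le> 1/4 \<or> t \<ge> 3/4")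
    case True
    then show ?thesis using perturbation'_eq_0_outside[OF assms, of t w] by (simp add: M_def)
  next
    case False
    then show ?thesis using t0(2)[of t] by (simp add: M_def)
  qed
  have "M \<ge> 0" by (simp add: M_def)
  then have "1 / (2 * (M + 1)) * \<bar>perturbation' N w t\<bar> \<le> 1/2" for t
    using M[of t] by (simp add: field_simps)
  moreover have "1 / (2 * (M + 1)) > 0"
    using \<open>M \<ge> 0\<close> by simp
  ultimately show ?thesis by blast
qed

section \<open>Reparametrised transitions\<close>

locale perturbed_transition =
  fixes N :: nat and w :: "nat \<Rightarrow> real" and \<epsilon> :: real
  assumes N_ge_1: "N \<ge> 1"
    and weights_sum: "(\<Sum>j=1..N. w j) = 0"
    and eps_pos: "\<epsilon> > 0"
    and eps_small: "\<And>t. \<epsilon> * \<bar>perturbation' N w t\<bar> \<le> 1/2"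
begin

definition sigma :: "real \<Rightarrow> real" where
  "sigma t = t + \<epsilon> * perturbation N w t"

definition sigma' :: "real \<Rightarrow> real" where
  "sigma' t = 1 + \<epsilon> * perturbation' N w t"

definition phi :: "real \<Rightarrow> real" where
  "phi t = psi (sigma t)"

definition integrand :: "real \<Rightarrow> real" where
  "integrand s = phi s * (deriv phi s)^2"

definition G :: "real \<Rightarrow> real" where
  "G t = integral {-1..t} integrand"

definition J :: "real \<Rightarrow> real" where
  "J x = G (- sigma x) - G x"

definition q :: "real \<Rightarrow> real" where
  "q t = Q (sigma t) * sigma' t"

lemma sigma_has_derivative: "(sigma has_real_derivative sigma' t) (at t)"
  unfolding sigma_def[abs_def] sigma'_def
  by (intro DERIV_add DERIV_cmult perturbation_has_derivative DERIV_ident)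

lemma sigma'_bounds: "1/2 \<le> sigma' t \<and> sigma' t \<le> 3/2"
proof -
  have "\<bar>\<epsilon> * perturbation' N w t\<bar> \<le> 1/2"
    using eps_small[of t] eps_pos by (simp add: abs_mult)
  then show ?thesis
    unfolding sigma'_def abs_le_iff by linarith
qed

lemma sigma_strict_mono: "strict_mono sigma"
proof (rule strict_monoI)
  fix s t :: real assume "s < t"
  show "sigma s < sigma t"
  proof (rule DERIV_pos_imp_increasing[OF \<open>s < t\<close>])
    fix x show "\<exists>y. (sigma has_real_derivative y) (at x) \<and> 0 < y"
      using sigma_has_derivative sigma'_bounds[of x] by fastforce
  qed
qed

lemma sigma_eq_below: "t \<le> 1/4 \<Longrightarrow> sigma t = t"
  using perturbation_eq_0_below[OF N_ge_1, of t w] by (simp add: sigma_def)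

lemma sigma_eq_above: "t \<ge> 3/4 \<Longrightarrow> sigma t = t"
  using perturbation_eq_0_above[OF N_ge_1 weights_sum, of t] by (simp add: sigma_def)

lemma sigma'_eq_1_outside: "t \<le> 1/4 \<or> t \<ge> 3/4 \<Longrightarrow> sigma' t = 1"
  using perturbation'_eq_0_outside[OF N_ge_1, of t w] by (simp add: sigma'_def)

lemma sigma_0: "sigma 0 = 0"
  by (simp add: sigma_eq_below)

lemma sigma_bounds:
  assumes "a \<le> 1/4" "3/4 \<le> b" "a \<le> t" "t \<le> b"
  shows "a \<le> sigma t \<and> sigma t \<le> b"
  using strict_mono_less_eq[OF sigma_strict_mono, of a t] strict_mono_less_eq[OF sigma_strict_mono, of t b]
    assms sigma_eq_below[of a] sigma_eq_above[of b]
  by simp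

lemma sigma_strict_bounds:
  assumes "a \<le> 1/4" "3/4 \<le> b" "a < t" "t < b"
  shows "a < sigma t \<and> sigma t < b"
  using strict_mono_less[OF sigma_strict_mono, of a t] strict_mono_less[OF sigma_strict_mono, of t b]
    assms sigma_eq_below[of a] sigma_eq_above[of b]
  by simp

lemma smooth_fun_phi: "smooth_fun phi"
proof -
  have "smooth_fun sigma"
    unfolding sigma_def[abs_def]
    by (intro smooth_fun_add smooth_fun_mult smooth_fun_ident smooth_fun_const smooth_fun_perturbation)
  then show ?thesis
    unfolding phi_def[abs_def] by (rule smooth_fun_compose[OF smooth_fun_psi])
qed

lemma deriv_phi: "deriv phi t = psi' (sigma t) * sigma' t"
  unfolding phi_def[abs_def] by (rule DERIV_imp_deriv, rule DERIV_chain2[OF psi_has_derivative sigma_has_derivative])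

lemma monotonic_transition_phi: "monotonic_transition phi"
  unfolding monotonic_transition_def transition_fun_def
proof (intro conjI allI impI ballI)
  show "smooth_fun phi" by (rule smooth_fun_phi)
  fix t :: real
  show "t \<le> -1 \<Longrightarrow> phi t = -1" by (simp add: phi_def sigma_eq_below psi_eq_minus_1)
  show "t \<ge> 1 \<Longrightarrow> phi t = 1" by (simp add: phi_def sigma_eq_above psi_eq_1)
next
  fix t :: real assume "t \<in> {-1<..<1}"
  then have "-1 < sigma t \<and> sigma t < 1" by (intro sigma_strict_bounds) auto
  then show "deriv phi t > 0" using sigma'_bounds[of t] by (simp add: deriv_phi psi'_pos)
qed

lemma phi_0: "phi 0 = 0"
  by (simp add: phi_def sigma_0 psi_0)

lemma deriv_phi_0_pos: "deriv phi 0 > 0"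
  by (simp add: deriv_phi sigma_0 sigma'_eq_1_outside psi'_pos)

lemma L_fun_phi:
  assumes "0 < x" "x < 1"
  shows "L_fun phi x = - sigma x"
  unfolding L_fun_def
proof (rule the_equality)
  have s: "0 < sigma x" "sigma x < 1" using sigma_strict_bounds[of 0 1 x] assms by auto
  then show "- sigma x \<in> {-1<..<0} \<and> phi (- sigma x) = - phi x"
    by (simp add: phi_def sigma_eq_below psi_minus)
  fix y assume y: "y \<in> {-1<..<0} \<and> phi y = - phi x"
  moreover have "sigma y = y" using y by (intro sigma_eq_below) auto
  ultimately have "psi y = psi (- sigma x)"
    by (simp add: phi_def psi_minus)
  then show "y = - sigma x"
    using strict_mono_on_eqD[OF psi_strict_mono_on] y s by auto
qed

lemma isCont_integrand: "isCont integrand t"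
proof -
  have "isCont phi t" "isCont (deriv phi) t"
    using smooth_fun_isCont smooth_fun_deriv smooth_fun_phi by blast+
  then show ?thesis unfolding integrand_def[abs_def] by (intro continuous_intros)
qed

lemma I_fun_phi:
  assumes "0 < x" "x < 1"
  shows "I_fun phi x = 4 * J x"
proof -
  have s: "0 < sigma x" "sigma x < 1" using sigma_strict_bounds[of 0 1 x] assms by auto
  have "integral {-1..- sigma x} integrand + integral {- sigma x..x} integrand = integral {-1..x} integrand"
    using s assms isCont_integrand
    by (intro Henstock_Kurzweil_Integration.integral_combine integrable_continuous_real
          continuous_at_imp_continuous_on) auto
  then show ?thesis
    using s assms unfolding I_fun_def L_fun_phi[OF assms] J_def G_def integrand_def[symmetric] by simp
qed

lemma G_has_derivative:
  assumes "-1 < y" "y < 1"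
  shows "(G has_real_derivative integrand y) (at y)"
proof -
  have "(G has_real_derivative integrand y) (at y within {-1..1})"
    unfolding G_def[abs_def] using assms isCont_integrand
    by (intro integral_has_real_derivative continuous_at_imp_continuous_on) auto
  then have "(G has_real_derivative integrand y) (at y within {-1<..<1})"
    by (rule DERIV_subset) auto
  moreover have "at y within {-1<..<1} = at y" by (rule at_within_open) (use assms in auto)
  ultimately show ?thesis by simp
qed

text \<open>Near \<open>- sigma x \<le> 0\<close> the function \<open>phi\<close> is \<open>psi\<close>, which is odd with even derivative;
  hence the two contributions to \<open>J'\<close> only differ through \<open>sigma'\<close>, and
  \<open>sigma'\<^sup>2 - sigma' = \<epsilon> * perturbation' * sigma'\<close>.\<close>

lemma J_has_derivative:
  assumes "0 \<le> x" "x < 1"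
  shows "(J has_real_derivative - (\<epsilon> * q x * perturbation' N w x)) (at x)"
proof -
  have "0 \<le> sigma x \<and> sigma x < 1"
    using sigma_strict_bounds[of 0 1 x] assms sigma_0 by (cases "x = 0") auto
  then have s: "0 \<le> sigma x" "sigma x < 1" by auto
  have "(J has_real_derivative integrand (- sigma x) * (- sigma' x) - integrand x) (at x)"
    unfolding J_def[abs_def] using s assms
    by (intro DERIV_diff DERIV_chain2[OF G_has_derivative] DERIV_minus sigma_has_derivative G_has_derivative) auto
  moreover have "integrand (- sigma x) = - Q (sigma x)"
    using s by (simp add: integrand_def deriv_phi Q_def phi_def sigma_eq_below sigma'_eq_1_outside
        psi_minus psi'_minus)
  moreover have "integrand x = Q (sigma x) * (sigma' x)^2"
    by (simp add: integrand_def deriv_phi Q_def phi_def power_mult_distrib)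
  ultimately show ?thesis
    by (simp add: q_def sigma'_def power2_eq_square algebra_simps)
qed

lemma I_fun_phi_has_derivative:
  assumes "0 < x" "x < 1"
  shows "(I_fun phi has_real_derivative - 4 * (\<epsilon> * q x * perturbation' N w x)) (at x)"
proof (rule has_field_derivative_transform_within_open[of "\<lambda>x. 4 * J x" _ x "{0<..<1}"])
  show "((\<lambda>x. 4 * J x) has_real_derivative - 4 * (\<epsilon> * q x * perturbation' N w x)) (at x)"
    using DERIV_cmult[OF J_has_derivative, of x 4] assms by simp
qed (use assms I_fun_phi in auto)

lemma J_quarter: "J (1/4) = 0"
proof -
  have "(J has_real_derivative 0) (at t)" if "0 \<le> t" "t \<le> 1/4" for t
    using J_has_derivative[of t] perturbation'_eq_0_outside[OF N_ge_1, of t w] that by simp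
  then have "J (1/4) = J 0"
    by (intro DERIV_isconst_end continuous_at_imp_continuous_on ballI DERIV_isCont) force+
  then show ?thesis by (simp add: J_def sigma_0)
qed

lemma q_bounds:
  assumes "\<And>y. 1/4 \<le> y \<Longrightarrow> y \<le> 3/4 \<Longrightarrow> a \<le> Q y \<and> Q y \<le> b" "a > 0" "1/4 \<le> t" "t \<le> 3/4"
  shows "a/2 \<le> q t \<and> q t \<le> 3/2 * b"
proof -
  have "a \<le> Q (sigma t) \<and> Q (sigma t) \<le> b"
    using assms sigma_bounds[of "1/4" "3/4" t] by auto
  then show ?thesis
    using sigma'_bounds[of t] \<open>a > 0\<close> mult_mono[of a "Q (sigma t)" "1/2" "sigma' t"]
      mult_mono[of "Q (sigma t)" b "sigma' t" "3/2"]
    by (auto simp: q_def)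
qed

end


locale alternating_perturbation = perturbed_transition +
  fixes Qlo Qhi r :: real
  assumes Q_bounds: "\<And>y. 1/4 \<le> y \<Longrightarrow> y \<le> 3/4 \<Longrightarrow> Qlo \<le> Q y \<and> Q y \<le> Qhi"
    and Qlo_pos: "Qlo > 0"
    and ratio_large: "Qlo / 2 * r > 3 * Qhi"
    and alternating_weights: "\<And>j. 1 \<le> j \<Longrightarrow> j < N \<Longrightarrow> w j = (-1) ^ Suc j * r ^ j"
begin

lemma Qhi_pos: "Qhi > 0"
  using Q_bounds[of "1/2"] Qlo_pos by simp

lemma r_pos: "r > 0"
proof -
  have "Qlo / 2 * r > 0" using ratio_large Qhi_pos by linarith
  then show ?thesis using Qlo_pos by (simp add: zero_less_mult_iff)
qed

lemma q_pos: "1/4 \<le> t \<Longrightarrow> t \<le> 3/4 \<Longrightarrow> q t > 0"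
proof -
  assume "1/4 \<le> t" "t \<le> 3/4"
  then have "Qlo/2 \<le> q t" using q_bounds[OF Q_bounds Qlo_pos] by blast
  then show ?thesis using Qlo_pos by linarith
qed

lemma cell_increment_bounds:
  assumes "1 \<le> m" "m < N"
  shows "Qlo/2 * (\<epsilon> * r^m) \<le> (-1)^m * (J (grid N m) - J (grid N (m - 1)))
       \<and> (-1)^m * (J (grid N m) - J (grid N (m - 1))) \<le> 3/2 * Qhi * (\<epsilon> * r^m)"
proof -
  let ?p = "grid N (m - 1)" and ?r = "grid N m"
  have cell: "1/4 \<le> t \<and> t \<le> 3/4" if "t \<in> {?p..?r}" for t
  proof -
    have "m - 1 \<le> N" "m \<le> N" using assms by auto
    then show ?thesis
      using grid_bounds[OF N_ge_1, of "m - 1"] grid_bounds[OF N_ge_1, of m] that by auto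
  qed
  have sign: "(-1::real)^m * (-1)^m = 1"
    by (simp flip: power_mult_distrib)
  have "((\<lambda>t. (-1)^m * J t) has_real_derivative q t * (\<epsilon> * r^m * ramp' N m t)) (at t)"
    if "t \<in> {?p..?r}" for t
  proof -
    have "perturbation' N w t = w m * ramp' N m t"
      using that assms by (intro perturbation'_cell[OF N_ge_1]) auto
    then have "perturbation' N w t = (-1)^Suc m * r^m * ramp' N m t"
      using alternating_weights[OF assms] by simp
    then show ?thesis
      using DERIV_cmult[OF J_has_derivative, of t "(-1)^m"] cell[OF that]
      by (simp add: algebra_simps sign)
  qed
  moreover have "((\<lambda>t. \<epsilon> * r^m * ramp N m t) has_real_derivative \<epsilon> * r^m * ramp' N m t) (at t)" for t
    by (intro DERIV_cmult ramp_has_derivative)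
  moreover have "\<epsilon> * r^m * ramp' N m t \<ge> 0" for t
    using eps_pos r_pos ramp'_nonneg by simp
  moreover have "Qlo/2 \<le> q t \<and> q t \<le> 3/2 * Qhi" if "t \<in> {?p..?r}" for t
    using q_bounds[OF Q_bounds Qlo_pos] cell[OF that] by auto
  moreover have "?p \<le> ?r"
    using strict_mono_less_eq[OF grid_strict_mono[OF N_ge_1]] by simp
  ultimately have "Qlo/2 * (\<epsilon> * r^m * ramp N m ?r - \<epsilon> * r^m * ramp N m ?p)
        \<le> (-1)^m * J ?r - (-1)^m * J ?p
      \<and> (-1)^m * J ?r - (-1)^m * J ?p
        \<le> 3/2 * Qhi * (\<epsilon> * r^m * ramp N m ?r - \<epsilon> * r^m * ramp N m ?p)"
    by (intro increment_bounds_by_comparison[where F = "\<lambda>t. (-1)^m * J t" and W = "\<lambda>t. \<epsilon> * r^m * ramp N m t"])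
  moreover have "\<epsilon> * r^m * ramp N m ?r - \<epsilon> * r^m * ramp N m ?p = \<epsilon> * r^m"
    using ramp_increment[OF N_ge_1 assms(1)] by (simp flip: right_diff_distrib)
  ultimately show ?thesis
    unfolding right_diff_distrib[of "(-1)^m"] by (simp only:)
qed

text \<open>The weights grow so fast that on each cell the new increment of \<open>J\<close> dominates the
  accumulated value, so \<open>J\<close> has sign \<open>(-1)^m\<close> at the grid points.\<close>

lemma J_grid_alternates:
  "m < N \<Longrightarrow> 0 \<le> (-1)^m * J (grid N m) \<and> (-1)^m * J (grid N m) \<le> 3 * Qhi * \<epsilon> * r^m
     \<and> (1 \<le> m \<longrightarrow> 0 < (-1)^m * J (grid N m))"
proof (induction m)
  case 0
  then show ?case using J_quarter Qhi_pos eps_pos by (simp add: grid_0)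
next
  case (Suc m)
  then have IH: "0 \<le> (-1)^m * J (grid N m)" "(-1)^m * J (grid N m) \<le> 3 * Qhi * \<epsilon> * r^m"
    by auto
  have incr: "Qlo/2 * (\<epsilon> * r^Suc m) \<le> (-1)^Suc m * J (grid N (Suc m)) + (-1)^m * J (grid N m)"
      "(-1)^Suc m * J (grid N (Suc m)) + (-1)^m * J (grid N m) \<le> 3/2 * Qhi * (\<epsilon> * r^Suc m)"
    using cell_increment_bounds[of "Suc m"] Suc.prems by (auto simp: algebra_simps)
  have "3 * Qhi * \<epsilon> * r^m < Qlo/2 * (\<epsilon> * r^Suc m)"
    using ratio_large eps_pos r_pos mult_strict_left_mono[OF ratio_large, of "\<epsilon> * r^m"]
    by (simp add: algebra_simps)
  moreover have "3/2 * Qhi * (\<epsilon> * r^Suc m) \<le> 3 * Qhi * \<epsilon> * r^Suc m"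
    using Qhi_pos eps_pos r_pos by simp
  ultimately show ?case
    using IH incr by linarith
qed

lemma simple_zero_in_cell:
  assumes "1 \<le> m" "m + 1 < N"
  shows "\<exists>z\<in>{grid N m<..<grid N (m + 1)}. simple_zero (I_fun phi) z"
proof -
  let ?a = "grid N m" and ?b = "grid N (m + 1)"
  have ab: "?a < ?b"
    using strict_monoD[OF grid_strict_mono[OF N_ge_1]] by simp
  have cell: "1/4 \<le> t \<and> t \<le> 3/4" if "t \<in> {?a..?b}" for t
    using grid_bounds[OF N_ge_1, of m] grid_bounds[OF N_ge_1, of "m + 1"] assms that by auto
  have "0 < (-1)^m * J ?a" "0 < (-1)^Suc m * J ?b"
    using J_grid_alternates[of m] J_grid_alternates[of "Suc m"] assms by auto
  then have "0 < ((-1)^m * J ?a) * ((-1)^Suc m * J ?b)"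
    by (rule mult_pos_pos)
  then have "J ?a * J ?b < 0"
    by (simp add: algebra_simps flip: power_mult_distrib)
  moreover have "continuous_on {?a..?b} J"
  proof (intro continuous_at_imp_continuous_on ballI)
    fix t assume "t \<in> {?a..?b}"
    then have "0 \<le> t" "t < 1" using cell by force+
    then show "isCont J t" using J_has_derivative DERIV_isCont by blast
  qed
  ultimately obtain z where z: "z \<in> {?a<..<?b}" "J z = 0"
    using IVT_opposite_signs[of ?a ?b J] ab by auto
  then have z01: "0 < z" "z < 1" and zcell: "1/4 \<le> z" "z \<le> 3/4"
    using cell[of z] by auto
  have "perturbation' N w z = w (m + 1) * ramp' N (m + 1) z"
    using z assms by (intro perturbation'_cell[OF N_ge_1]) auto
  moreover have "w (m + 1) \<noteq> 0"
    using alternating_weights[of "m + 1"] assms r_pos by simp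
  moreover have "ramp' N (m + 1) z > 0"
    using z by (intro ramp'_pos[OF N_ge_1]) auto
  ultimately have "- 4 * (\<epsilon> * q z * perturbation' N w z) \<noteq> 0"
    using eps_pos q_pos[OF zcell] by simp
  then have "simple_zero (I_fun phi) z"
    unfolding simple_zero_def using I_fun_phi[OF z01] z(2) I_fun_phi_has_derivative[OF z01] by auto
  then show ?thesis using z(1) by blast
qed

lemma many_simple_zeros:
  "\<exists>S. finite S \<and> card S \<ge> N - 2 \<and> S \<subseteq> {0<..<1} \<and> (\<forall>x\<in>S. simple_zero (I_fun phi) x)"
proof -
  have ex: "\<forall>m\<in>{1..N - 2}. \<exists>z. z \<in> {grid N m<..<grid N (m + 1)} \<and> simple_zero (I_fun phi) z"
  proof
    fix m assume "m \<in> {1..N - 2}"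
    then have "1 \<le> m" "m + 1 < N" by auto
    then show "\<exists>z. z \<in> {grid N m<..<grid N (m + 1)} \<and> simple_zero (I_fun phi) z"
      using simple_zero_in_cell by blast
  qed
  obtain Z where Z: "\<And>m. m \<in> {1..N - 2} \<Longrightarrow>
      Z m \<in> {grid N m<..<grid N (m + 1)} \<and> simple_zero (I_fun phi) (Z m)"
    using bchoice[OF ex] by blast
  have "strict_mono_on {1..N - 2} Z"
  proof (rule strict_mono_onI)
    fix m m' assume "m \<in> {1..N - 2}" "m' \<in> {1..N - 2}" "m < m'"
    moreover have "grid N (m + 1) \<le> grid N m'"
      using strict_mono_less_eq[OF grid_strict_mono[OF N_ge_1]] \<open>m < m'\<close> by simp
    ultimately show "Z m < Z m'"
      using Z[of m] Z[of m'] by auto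
  qed
  then have "card (Z ` {1..N - 2}) = N - 2"
    by (simp add: card_image strict_mono_on_imp_inj_on)
  moreover have "Z ` {1..N - 2} \<subseteq> {0<..<1}"
  proof
    fix x assume "x \<in> Z ` {1..N - 2}"
    then obtain m where m: "m \<in> {1..N - 2}" "x = Z m" by auto
    moreover have "m \<le> N" "m + 1 \<le> N" using m(1) by auto
    ultimately show "x \<in> {0<..<1}"
      using Z[OF m(1)] grid_bounds[OF N_ge_1, of m] grid_bounds[OF N_ge_1, of "m + 1"] by auto
  qed
  moreover have "\<forall>x\<in>Z ` {1..N - 2}. simple_zero (I_fun phi) x"
    using Z by blast
  ultimately show ?thesis
    by (intro exI[of _ "Z ` {1..N - 2}"]) simp
qed

end


theorem mainTheorem5:
  fixes k :: nat
  assumes "k > 0"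
  shows "\<exists>\<phi>. monotonic_transition \<phi> \<and> \<phi> 0 = 0 \<and> deriv \<phi> 0 > 0 \<and>
           (\<exists>S. finite S \<and> card S \<ge> k \<and> S \<subseteq> {0<..<1} \<and>
                (\<forall>x\<in>S. simple_zero (I_fun \<phi>) x))"
proof -
  obtain Qlo Qhi where Qlo: "Qlo > 0" and Q_bounds: "\<And>y. 1/4 \<le> y \<Longrightarrow> y \<le> 3/4 \<Longrightarrow> Qlo \<le> Q y \<and> Q y \<le> Qhi"
    using Q_bounds_exist by blast
  define r where "r = 6 * Qhi / Qlo + 1"
  have ratio: "Qlo / 2 * r > 3 * Qhi"
    using Qlo by (simp add: r_def field_simps)
  define N where "N = k + 2"
  then have N: "N \<ge> 1" by simp
  obtain w where w: "(\<Sum>j=1..N. w j) = 0" "\<And>j. 1 \<le> j \<Longrightarrow> j < N \<Longrightarrow> w j = (-1) ^ Suc j * r ^ j"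
    using zero_sum_extension[OF N, of "\<lambda>j. (-1) ^ Suc j * r ^ j"] by blast
  obtain \<epsilon> where "\<epsilon> > 0" "\<And>t. \<epsilon> * \<bar>perturbation' N w t\<bar> \<le> 1/2"
    using small_amplitude_exists[OF N] by blast
  then interpret P: alternating_perturbation N w \<epsilon> Qlo Qhi r
    using N w Qlo Q_bounds ratio by unfold_locales auto
  obtain S where "finite S" "card S \<ge> N - 2" "S \<subseteq> {0<..<1}" "\<forall>x\<in>S. simple_zero (I_fun P.phi) x"
    using P.many_simple_zeros by blast
  moreover have "N - 2 = k" by (simp add: N_def)
  ultimately show ?thesis
    using P.monotonic_transition_phi P.phi_0 P.deriv_phi_0_pos by auto
qed

end
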